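(* Let $f,g\in\mathcal F^{\,r}_{op}$ and suppose $\tilde g(x)\le\tilde f(x)$ for all $x>0$. Then for every $n$, every faithful $\rho\in\mathcal D_n^1$ and every self-adjoint $A\in M_n(\mathbb C)$, $$I^f_\rho(A)\le I^g_\rho(A).$$
   Context: $\mathcal F_{op}$ is the class of functions $f:(0,\infty)\to(0,\infty)$ that are operator monotone, satisfy $f(1)=1$ and $tf(t^{-1})=f(t)$ for all $t>0$. $f(0):=\lim_{x\to0^+}f(x)$, and $\mathcal F^{\,r}_{op}=\{f\in\mathcal F_{op}: f(0)\neq0\}$. For $f\in\mathcal F^{\,r}_{op}$ and $x>0$, $\tilde f(x):=\frac12\big[(x+1)-(x-1)^2\frac{f(0)}{f(x)}\big]$. $\mathcal D_n^1$ is the set of strictly positive $n\times n$ density matrices. For $x,y>0$, $m_f(x,y)=xf(y/x)$; $L_\rho(X)=\rho X$, $R_\rho(X)=X\rho$, and $m_f(L_\rho,R_\rho)$ multiplies the entry $X_{ij}$ of $X$ (in an orthonormal eigenbasis of $\rho$ with eigenvalues $\lambda_i$) by $m_f(\lambda_i,\lambda_j)$. $\|X\|^2_{\rho,f}=\mathrm{Tr}\big(X^* m_f(L_\rho,R_\rho)^{-1}(X)\big)$. The $f$-information is $I^f_\rho(A)=\frac{f(0)}{2}\|i[\rho,A]\|^2_{\rho,f}$. *)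

theory Defs
  imports "HOL-Analysis.Analysis" "Jordan_Normal_Form.Matrix"
begin

definition adj :: "complex mat \<Rightarrow> complex mat" where
  "adj M = mat (dim_col M) (dim_row M) (\<lambda>(i,j). cnj (M $$ (j,i)))"

definition hermitian_mat :: "nat \<Rightarrow> complex mat \<Rightarrow> bool" where
  "hermitian_mat n A \<longleftrightarrow> A \<in> carrier_mat n n \<and> adj A = A"

definition unitary_mat :: "nat \<Rightarrow> complex mat \<Rightarrow> bool" where
  "unitary_mat n U \<longleftrightarrow> U \<in> carrier_mat n n \<and> adj U * U = 1\<^sub>m n"

definition rdiag :: "nat \<Rightarrow> (nat \<Rightarrow> real) \<Rightarrow> complex mat" where
  "rdiag n d = mat n n (\<lambda>(i,j). if i = j then complex_of_real (d i) else 0)"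

definition herm_decomp :: "nat \<Rightarrow> complex mat \<Rightarrow> complex mat \<Rightarrow> (nat \<Rightarrow> real) \<Rightarrow> bool" where
  "herm_decomp n A U d \<longleftrightarrow> unitary_mat n U \<and> A = U * rdiag n d * adj U"

text \<open>Functional calculus f(A) for Hermitian A (independent of the chosen diagonalisation).\<close>
definition mat_fun :: "nat \<Rightarrow> (real \<Rightarrow> real) \<Rightarrow> complex mat \<Rightarrow> complex mat" where
  "mat_fun n f A = (SOME B. \<exists>U d. herm_decomp n A U d \<and> B = U * rdiag n (f \<circ> d) * adj U)"

definition quad_form :: "nat \<Rightarrow> complex mat \<Rightarrow> complex vec \<Rightarrow> complex" where
  "quad_form n M v = (\<Sum>i<n. \<Sum>j<n. cnj (v $ i) * M $$ (i,j) * v $ j)"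

definition pos_def_mat :: "nat \<Rightarrow> complex mat \<Rightarrow> bool" where
  "pos_def_mat n A \<longleftrightarrow> hermitian_mat n A \<and>
     (\<forall>v \<in> carrier_vec n. v \<noteq> 0\<^sub>v n \<longrightarrow> Re (quad_form n A v) > 0)"

definition loewner_le :: "nat \<Rightarrow> complex mat \<Rightarrow> complex mat \<Rightarrow> bool" where
  "loewner_le n A B \<longleftrightarrow> hermitian_mat n A \<and> hermitian_mat n B \<and>
     (\<forall>v \<in> carrier_vec n. Re (quad_form n (B - A) v) \<ge> 0)"

definition operator_monotone :: "(real \<Rightarrow> real) \<Rightarrow> bool" where
  "operator_monotone f \<longleftrightarrow> (\<forall>n A B. pos_def_mat n A \<and> pos_def_mat n B \<and> loewner_le n A B
       \<longrightarrow> loewner_le n (mat_fun n f A) (mat_fun n f B))"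

definition F_op :: "(real \<Rightarrow> real) \<Rightarrow> bool" where
  "F_op f \<longleftrightarrow> (\<forall>x>0. f x > 0) \<and> operator_monotone f \<and> f 1 = 1 \<and>
     (\<forall>t>0. t * f (1 / t) = f t)"

definition f0 :: "(real \<Rightarrow> real) \<Rightarrow> real" where
  "f0 f = Lim (at_right 0) f"

definition F_op_r :: "(real \<Rightarrow> real) \<Rightarrow> bool" where
  "F_op_r f \<longleftrightarrow> F_op f \<and> f0 f \<noteq> 0"

definition tilde :: "(real \<Rightarrow> real) \<Rightarrow> real \<Rightarrow> real" where
  "tilde f x = ((x + 1) - (x - 1)^2 * (f0 f / f x)) / 2"

definition mf :: "(real \<Rightarrow> real) \<Rightarrow> real \<Rightarrow> real \<Rightarrow> real" where
  "mf f x y = x * f (y / x)"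

definition trace_c :: "nat \<Rightarrow> complex mat \<Rightarrow> complex" where
  "trace_c n M = (\<Sum>i<n. M $$ (i,i))"

definition density_pos :: "nat \<Rightarrow> complex mat \<Rightarrow> bool" where
  "density_pos n \<rho> \<longleftrightarrow> pos_def_mat n \<rho> \<and> trace_c n \<rho> = 1"

text \<open>m_f(L_rho,R_rho)^{-1}(X): in an eigenbasis of rho, divide entry X_ij by m_f(lambda_i,lambda_j).\<close>
definition mf_inv_apply :: "nat \<Rightarrow> (real \<Rightarrow> real) \<Rightarrow> complex mat \<Rightarrow> complex mat \<Rightarrow> complex mat" where
  "mf_inv_apply n f \<rho> X = (SOME Y. \<exists>U lam. herm_decomp n \<rho> U lam \<and>
      Y = U * mat n n (\<lambda>(i,j). (adj U * X * U) $$ (i,j) / complex_of_real (mf f (lam i) (lam j))) * adj U)"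

definition f_norm_sq :: "nat \<Rightarrow> (real \<Rightarrow> real) \<Rightarrow> complex mat \<Rightarrow> complex mat \<Rightarrow> real" where
  "f_norm_sq n f \<rho> X = Re (trace_c n (adj X * mf_inv_apply n f \<rho> X))"

definition f_information :: "nat \<Rightarrow> (real \<Rightarrow> real) \<Rightarrow> complex mat \<Rightarrow> complex mat \<Rightarrow> real" where
  "f_information n f \<rho> A = f0 f / 2 * f_norm_sq n f \<rho> (\<i> \<cdot>\<^sub>m (\<rho> * A - A * \<rho>))"

end

theory Submission
  imports Defs "Jordan_Normal_Form.Spectral_Radius"
begin

(*
  Diagonalise \<rho> = U diag(\<lambda>) U^* and put G = U^* A U. In this eigenbasis m_f(L_\<rho>, R_\<rho>)^-1
  divides the entry (k,i) by m_f(\<lambda>_k, \<lambda>_i) and the commutator multiplies it by \<lambda>_k - \<lambda>_i, so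

    I^f_\<rho>(A) = \<Sum>_{k,i} |G_ki|^2 f(0) (\<lambda>_k - \<lambda>_i)^2 / (2 m_f(\<lambda>_k, \<lambda>_i))
              = \<Sum>_{k,i} |G_ki|^2 ((\<lambda>_k + \<lambda>_i) / 2 - m_{tilde f}(\<lambda>_k, \<lambda>_i)),

  and, the eigenvalues being positive, tilde g \<le> tilde f compares the two informations term by
  term.
  Since m_f(L_\<rho>, R_\<rho>)^-1 is defined through an arbitrarily chosen eigenbasis, the real work is
  the spectral theorem for Hermitian matrices and the independence of the result from that
  choice: the transition matrix between two eigenbases only connects equal eigenvalues.
*)

lemma index_mult_mat_sum:
  assumes "A \<in> carrier_mat n m" "B \<in> carrier_mat m p" "i < n" "j < p"
  shows "(A * B) $$ (i,j) = (\<Sum>k<m. A $$ (i,k) * B $$ (k,j))"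
  using assms by (auto simp: scalar_prod_def lessThan_atLeast0 intro!: sum.cong)

lemma square_mult_carrier:
  "A \<in> carrier_mat n n \<Longrightarrow> B \<in> carrier_mat n n \<Longrightarrow> A * B \<in> carrier_mat n n"
  by auto

lemma square_mult_assoc:
  "A \<in> carrier_mat n n \<Longrightarrow> B \<in> carrier_mat n n \<Longrightarrow> C \<in> carrier_mat n n \<Longrightarrow> A * B * C = A * (B * C)"
  by (rule assoc_mult_mat) auto

lemma dim_adj [simp]: "dim_row (adj A) = dim_col A" "dim_col (adj A) = dim_row A"
  by (auto simp: adj_def)

lemma adj_carrier_mat [simp]: "A \<in> carrier_mat m n \<Longrightarrow> adj A \<in> carrier_mat n m"
  by (auto simp: adj_def)

lemma index_adj [simp]: "i < dim_col A \<Longrightarrow> j < dim_row A \<Longrightarrow> adj A $$ (i,j) = cnj (A $$ (j,i))"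
  by (auto simp: adj_def)

lemma adj_mult:
  assumes "A \<in> carrier_mat m n" "B \<in> carrier_mat n p"
  shows "adj (A * B) = adj B * adj A"
proof (rule eq_matI)
  fix i j assume "i < dim_row (adj B * adj A)" "j < dim_col (adj B * adj A)"
  then have i: "i < p" and j: "j < m" using assms by auto
  have "adj (A * B) $$ (i,j) = (\<Sum>k<n. cnj (A $$ (j,k)) * cnj (B $$ (k,i)))"
    using assms i j index_mult_mat_sum[OF assms j i] by simp
  also have "\<dots> = (adj B * adj A) $$ (i,j)"
    using assms i j
    by (subst index_mult_mat_sum[of _ p n _ m]) (auto intro!: sum.cong simp: mult.commute)
  finally show "adj (A * B) $$ (i,j) = (adj B * adj A) $$ (i,j)" .
qed (use assms in auto)

lemma adj_adj [simp]: "adj (adj A) = A"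
  by (rule eq_matI) (auto simp: adj_def)

lemma rdiag_carrier_mat [simp]: "rdiag n d \<in> carrier_mat n n"
  by (auto simp: rdiag_def)

lemma index_mult_rdiag:
  assumes "U \<in> carrier_mat m n" "i < m" "k < n"
  shows "(U * rdiag n d) $$ (i,k) = U $$ (i,k) * complex_of_real (d k)"
proof -
  have "(U * rdiag n d) $$ (i,k) = (\<Sum>j<n. U $$ (i,j) * rdiag n d $$ (j,k))"
    using assms by (intro index_mult_mat_sum) auto
  also have "\<dots> = (\<Sum>j<n. if j = k then U $$ (i,k) * complex_of_real (d k) else 0)"
    using assms by (intro sum.cong) (auto simp: rdiag_def)
  finally show ?thesis using assms by simp
qed

lemma index_rdiag_mult:
  assumes "W \<in> carrier_mat n m" "i < n" "k < m"
  shows "(rdiag n d * W) $$ (i,k) = complex_of_real (d i) * W $$ (i,k)"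
proof -
  have "(rdiag n d * W) $$ (i,k) = (\<Sum>j<n. rdiag n d $$ (i,j) * W $$ (j,k))"
    using assms by (intro index_mult_mat_sum) auto
  also have "\<dots> = (\<Sum>j<n. if j = i then complex_of_real (d i) * W $$ (i,k) else 0)"
    using assms by (intro sum.cong) (auto simp: rdiag_def)
  finally show ?thesis using assms by simp
qed

lemma index_mult_rdiag_adj:
  assumes "U \<in> carrier_mat m n" "i < m" "j < m"
  shows "(U * rdiag n d * adj U) $$ (i,j) =
    (\<Sum>k<n. U $$ (i,k) * complex_of_real (d k) * cnj (U $$ (j,k)))"
  using assms
  by (subst index_mult_mat_sum[of _ m n _ m]) (auto intro!: sum.cong simp: index_mult_rdiag)

lemma hermitian_index_cnj:
  assumes "hermitian_mat n B" "i < n" "j < n"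
  shows "B $$ (i,j) = cnj (B $$ (j,i))"
  using assms index_adj[of i B j] unfolding hermitian_mat_def by auto

lemma unitary_mat_carrier: "unitary_mat n U \<Longrightarrow> U \<in> carrier_mat n n"
  by (simp add: unitary_mat_def)

lemma unitary_mat_right_inverse: "unitary_mat n U \<Longrightarrow> U * adj U = 1\<^sub>m n"
  using mat_mult_left_right_inverse[of "adj U" n U] unfolding unitary_mat_def by auto

lemma unitary_mat_mult:
  assumes "unitary_mat n U" "unitary_mat n V"
  shows "unitary_mat n (U * V)"
proof -
  have U: "U \<in> carrier_mat n n" and V: "V \<in> carrier_mat n n"
    and u: "adj U * U = 1\<^sub>m n" and v: "adj V * V = 1\<^sub>m n"
    using assms unfolding unitary_mat_def by auto
  have "adj (U * V) * (U * V) = adj V * (adj U * U) * V"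
    unfolding adj_mult[OF U V] using U V
    by (simp add: square_mult_assoc[of _ n] square_mult_carrier)
  also have "\<dots> = 1\<^sub>m n" using u v V by simp
  finally show ?thesis using U V unfolding unitary_mat_def by auto
qed

lemma hermitian_unitary_conj:
  assumes A: "hermitian_mat n A" and U: "U \<in> carrier_mat n n"
  shows "hermitian_mat n (adj U * A * U)"
proof -
  have Ac: "A \<in> carrier_mat n n" and aA: "adj A = A" using A unfolding hermitian_mat_def by auto
  have "adj (adj U * A * U) = adj U * adj (adj U * A)"
    using U Ac by (subst adj_mult[of _ n n _ n]) auto
  also have "\<dots> = adj U * A * U"
    using U Ac aA by (subst adj_mult[of _ n n _ n]) (auto simp: square_mult_assoc[of _ n])
  finally show ?thesis using U Ac unfolding hermitian_mat_def by auto
qed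

lemma unitary_mat_first_column:
  fixes v :: "complex vec"
  assumes v: "v \<in> carrier_vec n" and v0: "v \<noteq> 0\<^sub>v n"
  shows "\<exists>U c. unitary_mat n U \<and> c \<noteq> 0 \<and> (\<forall>k<n. U $$ (k,0) = c * v $ k)"
proof -
  interpret cof_vec_space n "TYPE(complex)" .
  define b where "b = basis_completion v"
  from basis_completion[OF v v0, folded b_def]
  have dist_b: "distinct b" and indep: "\<not> lin_dep (set b)" and b: "set b \<subseteq> carrier_vec n"
    and len_b: "length b = n" by auto
  obtain vs where bv: "b = v # vs" unfolding b_def basis_completion_def Let_def by auto
  have n: "0 < n" using len_b bv by auto
  define ws where "ws = gram_schmidt n b"
  from gram_schmidt_result[OF b dist_b indep refl, folded ws_def]
  have wsc: "set ws \<subseteq> carrier_vec n" and orth: "corthogonal ws" and lws: "length ws = n"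
    by (auto simp: len_b)
  have ws0: "ws ! 0 = v"
    using gram_schmidt_hd[OF v, of vs] n lws unfolding ws_def[symmetric] bv[symmetric]
    by (cases ws) auto
  define r where "r i = Re (ws!i \<bullet>c ws!i)" for i
  have r_pos: "0 < r i \<and> ws!i \<bullet>c ws!i = complex_of_real (r i)" if i: "i < n" for i
  proof -
    have "ws!i \<bullet>c ws!i \<noteq> 0" using corthogonalD[OF orth, of i i] i lws by auto
    then have "ws!i \<bullet>c ws!i > 0" using conjugate_square_ge_0_vec[of "ws!i"] by auto
    then show ?thesis unfolding r_def by (auto simp: less_complex_def complex_eq_iff)
  qed
  define U where "U = mat n n (\<lambda>(k,i). ws!i $ k / complex_of_real (sqrt (r i)))"
  have U: "U \<in> carrier_mat n n" unfolding U_def by auto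
  have "adj U * U = 1\<^sub>m n"
  proof (rule eq_matI)
    fix i j assume "i < dim_row (1\<^sub>m n)" "j < dim_col (1\<^sub>m n)"
    then have i: "i < n" and j: "j < n" by auto
    have wi: "ws ! i \<in> carrier_vec n" using wsc lws i by auto
    have "(adj U * U) $$ (i,j) = (\<Sum>k<n. ws!j $ k * cnj (ws!i $ k)) /
        (complex_of_real (sqrt (r i)) * complex_of_real (sqrt (r j)))"
      using U i j unfolding sum_divide_distrib
      by (subst index_mult_mat_sum[of _ n n _ n]) (auto simp: U_def intro!: sum.cong)
    also have "(\<Sum>k<n. ws!j $ k * cnj (ws!i $ k)) = ws!j \<bullet>c ws!i"
      using wi by (auto simp: scalar_prod_def lessThan_atLeast0)
    also have "\<dots> / (complex_of_real (sqrt (r i)) * complex_of_real (sqrt (r j))) = 1\<^sub>m n $$ (i,j)"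
    proof (cases "i = j")
      case True
      have "complex_of_real (sqrt (r i)) * complex_of_real (sqrt (r i)) = complex_of_real (r i)"
        using r_pos[OF i] by (simp flip: of_real_mult)
      then show ?thesis using True r_pos[OF i] i by simp
    next
      case False
      then show ?thesis using corthogonalD[OF orth, of j i] i j lws by auto
    qed
    finally show "(adj U * U) $$ (i,j) = 1\<^sub>m n $$ (i,j)" .
  qed (use U in auto)
  moreover have "1 / complex_of_real (sqrt (r 0)) \<noteq> 0" using r_pos[OF n] by simp
  moreover have "\<forall>k<n. U $$ (k,0) = 1 / complex_of_real (sqrt (r 0)) * v $ k"
    using n ws0 by (auto simp: U_def)
  ultimately show ?thesis using U unfolding unitary_mat_def by blast
qed

text \<open>Conjugating by a unitary whose first column is an eigenvector splits off that eigenvalue.\<close>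
lemma hermitian_deflate:
  assumes A: "hermitian_mat (Suc n) A"
  shows "\<exists>U e. unitary_mat (Suc n) U \<and>
    (\<forall>i<Suc n. (adj U * A * U) $$ (i,0) = (if i = 0 then complex_of_real e else 0))"
proof -
  have Ac: "A \<in> carrier_mat (Suc n) (Suc n)" using A unfolding hermitian_mat_def by auto
  obtain e where "e \<in> spectrum A" using spectrum_non_empty[OF Ac] by auto
  then obtain v where "eigenvector A v e" unfolding spectrum_def eigenvalue_def by auto
  then have v: "v \<in> carrier_vec (Suc n)" and v0: "v \<noteq> 0\<^sub>v (Suc n)" and Av: "A *\<^sub>v v = e \<cdot>\<^sub>v v"
    unfolding eigenvector_def using Ac by auto
  obtain U c where Uu: "unitary_mat (Suc n) U" and Ucol: "\<forall>k<Suc n. U $$ (k,0) = c * v $ k"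
    using unitary_mat_first_column[OF v v0] by auto
  have U: "U \<in> carrier_mat (Suc n) (Suc n)" and Ui: "adj U * U = 1\<^sub>m (Suc n)"
    using Uu unfolding unitary_mat_def by auto
  have AU: "(A * U) $$ (k,0) = e * U $$ (k,0)" if k: "k < Suc n" for k
  proof -
    have "(A * U) $$ (k,0) = (\<Sum>l<Suc n. A $$ (k,l) * U $$ (l,0))"
      using Ac U k by (intro index_mult_mat_sum) auto
    also have "\<dots> = c * (\<Sum>l<Suc n. A $$ (k,l) * v $ l)"
      unfolding sum_distrib_left using Ucol by (intro sum.cong) auto
    also have "(\<Sum>l<Suc n. A $$ (k,l) * v $ l) = (A *\<^sub>v v) $ k"
      using Ac v k by (auto simp: scalar_prod_def lessThan_atLeast0 intro!: sum.cong)
    finally show ?thesis using Av v k Ucol by simp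
  qed
  define B where "B = adj U * A * U"
  have Bcol: "B $$ (i,0) = (if i = 0 then e else 0)" if i: "i < Suc n" for i
  proof -
    have "B $$ (i,0) = (adj U * (A * U)) $$ (i,0)"
      unfolding B_def using Ac U by (simp add: square_mult_assoc[of _ "Suc n"])
    also have "\<dots> = (\<Sum>k<Suc n. adj U $$ (i,k) * (A * U) $$ (k,0))"
      using Ac U i by (intro index_mult_mat_sum[of _ "Suc n" "Suc n" _ "Suc n"]) auto
    also have "\<dots> = e * (\<Sum>k<Suc n. adj U $$ (i,k) * U $$ (k,0))"
      unfolding sum_distrib_left using AU by (intro sum.cong) auto
    also have "(\<Sum>k<Suc n. adj U $$ (i,k) * U $$ (k,0)) = (adj U * U) $$ (i,0)"
      using U i by (intro index_mult_mat_sum[symmetric]) auto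
    finally show ?thesis using Ui i by simp
  qed
  have "cnj e = e"
    using hermitian_index_cnj[OF hermitian_unitary_conj[OF A U], of 0 0] Bcol[of 0]
    by (simp add: B_def)
  then have "complex_of_real (Re e) = e" by (metis Reals_cnj_iff complex_is_Real_iff of_real_Re)
  then show ?thesis using Uu Bcol unfolding B_def by metis
qed

definition lower_block :: "nat \<Rightarrow> complex mat \<Rightarrow> complex mat" where
  "lower_block n B = mat n n (\<lambda>(i,j). B $$ (Suc i, Suc j))"

definition direct_sum_one :: "nat \<Rightarrow> complex mat \<Rightarrow> complex mat" where
  "direct_sum_one n U = mat (Suc n) (Suc n)
     (\<lambda>(i,j). if i = 0 \<or> j = 0 then (if i = j then 1 else 0) else U $$ (i - 1, j - 1))"

lemma hermitian_lower_block: "hermitian_mat (Suc n) B \<Longrightarrow> hermitian_mat n (lower_block n B)"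
  unfolding hermitian_mat_def lower_block_def
  by (auto intro!: eq_matI hermitian_index_cnj[symmetric] simp: hermitian_mat_def)

lemma unitary_direct_sum_one:
  assumes Uu: "unitary_mat n U"
  shows "unitary_mat (Suc n) (direct_sum_one n U)"
proof -
  have U: "U \<in> carrier_mat n n" and Ui: "adj U * U = 1\<^sub>m n" using Uu unfolding unitary_mat_def
    by auto
  have V: "direct_sum_one n U \<in> carrier_mat (Suc n) (Suc n)" unfolding direct_sum_one_def by auto
  have "adj (direct_sum_one n U) * direct_sum_one n U = 1\<^sub>m (Suc n)"
  proof (rule eq_matI)
    fix i j assume "i < dim_row (1\<^sub>m (Suc n))" "j < dim_col (1\<^sub>m (Suc n))"
    then have i: "i < Suc n" and j: "j < Suc n" by auto
    have "(adj (direct_sum_one n U) * direct_sum_one n U) $$ (i,j) =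
        (\<Sum>k<Suc n. cnj (direct_sum_one n U $$ (k,i)) * direct_sum_one n U $$ (k,j))"
      using V i j
      by (subst index_mult_mat_sum[of _ "Suc n" "Suc n" _ "Suc n"]) (auto simp del: sum.lessThan_Suc)
    also have "\<dots> = cnj (direct_sum_one n U $$ (0,i)) * direct_sum_one n U $$ (0,j)
        + (\<Sum>k<n. cnj (direct_sum_one n U $$ (Suc k,i)) * direct_sum_one n U $$ (Suc k,j))"
      by (subst sum.lessThan_Suc_shift) simp
    also have "\<dots> = 1\<^sub>m (Suc n) $$ (i,j)"
    proof (cases "i = 0 \<or> j = 0")
      case True
      then show ?thesis using i j by (auto simp: direct_sum_one_def)
    next
      case False
      then obtain i' j' where ii: "i = Suc i'" and jj: "j = Suc j'" by (metis not0_implies_Suc)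
      have "(\<Sum>k<n. cnj (direct_sum_one n U $$ (Suc k,i)) * direct_sum_one n U $$ (Suc k,j)) =
          (adj U * U) $$ (i',j')"
        using U i j ii jj
        by (subst index_mult_mat_sum[of _ n n _ n]) (auto simp: direct_sum_one_def)
      then show ?thesis using Ui i j ii jj by (auto simp: direct_sum_one_def)
    qed
    finally show "(adj (direct_sum_one n U) * direct_sum_one n U) $$ (i,j) = 1\<^sub>m (Suc n) $$ (i,j)" .
  qed (use V in auto)
  then show ?thesis using V unfolding unitary_mat_def by auto
qed

lemma herm_decomp_direct_sum_one:
  assumes B: "hermitian_mat (Suc n) B"
    and Bcol: "\<forall>i<Suc n. B $$ (i,0) = (if i = 0 then complex_of_real e else 0)"
    and dec: "herm_decomp n (lower_block n B) U d"
  shows "herm_decomp (Suc n) B (direct_sum_one n U) (\<lambda>i. if i = 0 then e else d (i - 1))"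
    (is "herm_decomp _ _ ?V ?d")
proof -
  have Uu: "unitary_mat n U" and U: "U \<in> carrier_mat n n"
    and low: "lower_block n B = U * rdiag n d * adj U"
    using dec unfolding herm_decomp_def unitary_mat_def by auto
  have Bc: "B \<in> carrier_mat (Suc n) (Suc n)" using B unfolding hermitian_mat_def by auto
  have V: "?V \<in> carrier_mat (Suc n) (Suc n)" unfolding direct_sum_one_def by auto
  have Brow: "B $$ (0,j) = (if j = 0 then complex_of_real e else 0)" if "j < Suc n" for j
    using hermitian_index_cnj[OF B _ that, of 0] Bcol that by auto
  have "B = ?V * rdiag (Suc n) ?d * adj ?V"
  proof (rule eq_matI)
    fix i j
    assume "i < dim_row (?V * rdiag (Suc n) ?d * adj ?V)" "j < dim_col (?V * rdiag (Suc n) ?d * adj ?V)"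
    then have i: "i < Suc n" and j: "j < Suc n" using V by auto
    have "(?V * rdiag (Suc n) ?d * adj ?V) $$ (i,j) =
        ?V $$ (i,0) * complex_of_real (?d 0) * cnj (?V $$ (j,0))
        + (\<Sum>k<n. ?V $$ (i,Suc k) * complex_of_real (?d (Suc k)) * cnj (?V $$ (j,Suc k)))"
      using index_mult_rdiag_adj[OF V i j]
      by (simp add: sum.lessThan_Suc_shift del: sum.lessThan_Suc)
    also have "\<dots> = B $$ (i,j)"
    proof (cases "i = 0 \<or> j = 0")
      case True
      then show ?thesis using i j Bcol Brow by (auto simp: direct_sum_one_def)
    next
      case False
      then obtain i' j' where ii: "i = Suc i'" and jj: "j = Suc j'" by (metis not0_implies_Suc)
      have "(\<Sum>k<n. ?V $$ (i,Suc k) * complex_of_real (?d (Suc k)) * cnj (?V $$ (j,Suc k)))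
          = (U * rdiag n d * adj U) $$ (i',j')"
        using U i j ii jj by (subst index_mult_rdiag_adj) (auto simp: direct_sum_one_def)
      moreover have "?V $$ (i,0) = 0" using i ii by (simp add: direct_sum_one_def)
      moreover have "(U * rdiag n d * adj U) $$ (i',j') = B $$ (i,j)"
        unfolding low[symmetric] lower_block_def using i j ii jj by simp
      ultimately show ?thesis using ii by simp
    qed
    finally show "B $$ (i,j) = (?V * rdiag (Suc n) ?d * adj ?V) $$ (i,j)" by simp
  qed (use Bc V in auto)
  then show ?thesis using unitary_direct_sum_one[OF Uu] unfolding herm_decomp_def by auto
qed

lemma herm_decomp_unitary_conj:
  assumes Vu: "unitary_mat n V" and A: "A \<in> carrier_mat n n"
    and dec: "herm_decomp n (adj V * A * V) U d"
  shows "herm_decomp n A (V * U) d"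
proof -
  have V: "V \<in> carrier_mat n n" and U: "U \<in> carrier_mat n n" and Uu: "unitary_mat n U"
    and eq: "adj V * A * V = U * rdiag n d * adj U"
    using Vu dec unfolding herm_decomp_def unitary_mat_def by auto
  have "A = (V * adj V) * A * (V * adj V)" using A unitary_mat_right_inverse[OF Vu] by simp
  also have "\<dots> = V * (adj V * A * V) * adj V"
    using A V by (simp add: square_mult_assoc[of _ n] square_mult_carrier)
  also have "\<dots> = (V * U) * rdiag n d * adj (V * U)"
    unfolding eq adj_mult[OF V U] using U V
    by (simp add: square_mult_assoc[of _ n] square_mult_carrier)
  finally show ?thesis using unitary_mat_mult[OF Vu Uu] unfolding herm_decomp_def by blast
qed

theorem herm_decomp_exists: "hermitian_mat n A \<Longrightarrow> \<exists>U d. herm_decomp n A U d"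
proof (induction n arbitrary: A)
  case 0
  then have "A = 1\<^sub>m 0 * rdiag 0 (\<lambda>_. 0) * adj (1\<^sub>m 0)"
    by (intro eq_matI) (auto simp: hermitian_mat_def)
  then show ?case unfolding herm_decomp_def unitary_mat_def by (intro exI[of _ "1\<^sub>m 0"]) auto
next
  case (Suc n)
  have A: "A \<in> carrier_mat (Suc n) (Suc n)" using Suc.prems unfolding hermitian_mat_def by auto
  obtain V e where Vu: "unitary_mat (Suc n) V"
    and col: "\<forall>i<Suc n. (adj V * A * V) $$ (i,0) = (if i = 0 then complex_of_real e else 0)"
    using hermitian_deflate[OF Suc.prems] by blast
  have B: "hermitian_mat (Suc n) (adj V * A * V)"
    using hermitian_unitary_conj[OF Suc.prems unitary_mat_carrier[OF Vu]] .
  obtain U d where "herm_decomp n (lower_block n (adj V * A * V)) U d"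
    using Suc.IH[OF hermitian_lower_block[OF B]] by blast
  from herm_decomp_unitary_conj[OF Vu A herm_decomp_direct_sum_one[OF B col this]]
  show ?case by blast
qed

lemma herm_decomp_diagonalizes:
  assumes "herm_decomp n \<rho> U l"
  shows "adj U * \<rho> * U = rdiag n l"
proof -
  have U: "U \<in> carrier_mat n n" and Ui: "adj U * U = 1\<^sub>m n" and \<rho>: "\<rho> = U * rdiag n l * adj U"
    using assms unfolding herm_decomp_def unitary_mat_def by auto
  have "adj U * \<rho> * U = (adj U * U) * rdiag n l * (adj U * U)"
    unfolding \<rho> using U by (simp add: square_mult_assoc[of _ n] square_mult_carrier)
  then show ?thesis
    using Ui left_mult_one_mat[of "rdiag n l" n n] right_mult_one_mat[of "rdiag n l" n n] by simp
qed

lemma quad_form_col: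
  assumes M: "M \<in> carrier_mat n n" and U: "U \<in> carrier_mat n n" and k: "k < n"
  shows "quad_form n M (col U k) = (adj U * M * U) $$ (k,k)"
proof -
  have "(adj U * M * U) $$ (k,k) = (\<Sum>j<n. (adj U * M) $$ (k,j) * U $$ (j,k))"
    using assms by (intro index_mult_mat_sum[of _ n n _ n]) auto
  also have "\<dots> = (\<Sum>j<n. \<Sum>i<n. cnj (U $$ (i,k)) * M $$ (i,j) * U $$ (j,k))"
  proof (intro sum.cong refl)
    fix j assume "j \<in> {..<n}"
    then have "(adj U * M) $$ (k,j) = (\<Sum>i<n. adj U $$ (k,i) * M $$ (i,j))"
      using assms by (intro index_mult_mat_sum[of _ n n _ n]) auto
    then show "(adj U * M) $$ (k,j) * U $$ (j,k) =
        (\<Sum>i<n. cnj (U $$ (i,k)) * M $$ (i,j) * U $$ (j,k))"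
      using U k by (simp add: sum_distrib_right)
  qed
  also have "\<dots> = (\<Sum>i<n. \<Sum>j<n. cnj (U $$ (i,k)) * M $$ (i,j) * U $$ (j,k))"
    by (rule sum.swap)
  also have "\<dots> = quad_form n M (col U k)"
    unfolding quad_form_def using U k by (intro sum.cong refl) auto
  finally show ?thesis ..
qed

lemma herm_decomp_eigenvalue_pos:
  assumes p: "pos_def_mat n \<rho>" and d: "herm_decomp n \<rho> U l" and k: "k < n"
  shows "l k > 0"
proof -
  have U: "U \<in> carrier_mat n n" and Ui: "adj U * U = 1\<^sub>m n" and \<rho>: "\<rho> \<in> carrier_mat n n"
    using p d unfolding herm_decomp_def unitary_mat_def pos_def_mat_def hermitian_mat_def by auto
  have "quad_form n \<rho> (col U k) = complex_of_real (l k)"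
    using quad_form_col[OF \<rho> U k] herm_decomp_diagonalizes[OF d] k by (simp add: rdiag_def)
  moreover have "col U k \<noteq> 0\<^sub>v n"
  proof
    assume "col U k = 0\<^sub>v n"
    then have "quad_form n (1\<^sub>m n) (col U k) = 0" by (simp add: quad_form_def)
    moreover have "quad_form n (1\<^sub>m n) (col U k) = 1"
      using quad_form_col[OF one_carrier_mat U k] Ui U k by simp
    ultimately show False by simp
  qed
  moreover have "col U k \<in> carrier_vec n" using U by auto
  ultimately show ?thesis using p unfolding pos_def_mat_def by force
qed

definition kernel_div ::
    "nat \<Rightarrow> (nat \<Rightarrow> real) \<Rightarrow> (real \<Rightarrow> real \<Rightarrow> real) \<Rightarrow> complex mat \<Rightarrow> complex mat" where
  "kernel_div n l K C = mat n n (\<lambda>(i,j). C $$ (i,j) / complex_of_real (K (l i) (l j)))"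

definition kernel_inv_apply ::
    "nat \<Rightarrow> complex mat \<Rightarrow> (nat \<Rightarrow> real) \<Rightarrow> (real \<Rightarrow> real \<Rightarrow> real) \<Rightarrow> complex mat \<Rightarrow> complex mat" where
  "kernel_inv_apply n U l K X = U * kernel_div n l K (adj U * X * U) * adj U"

lemma unitary_conj_transition:
  assumes U1u: "unitary_mat n U1" and U2u: "unitary_mat n U2" and X: "X \<in> carrier_mat n n"
  shows "(adj U1 * X * U1) * (adj U1 * U2) = (adj U1 * U2) * (adj U2 * X * U2)"
proof -
  have U1: "U1 \<in> carrier_mat n n" and U2: "U2 \<in> carrier_mat n n"
    using U1u U2u by (simp_all add: unitary_mat_carrier)
  have "(adj U1 * X * U1) * (adj U1 * U2) = adj U1 * X * (U1 * adj U1) * U2"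
    using U1 U2 X by (simp add: square_mult_assoc[of _ n] square_mult_carrier)
  also have "\<dots> = adj U1 * (U2 * adj U2) * X * U2"
    using U1 U2 X unitary_mat_right_inverse[OF U1u] unitary_mat_right_inverse[OF U2u] by simp
  also have "\<dots> = (adj U1 * U2) * (adj U2 * X * U2)"
    using U1 U2 X by (simp add: square_mult_assoc[of _ n] square_mult_carrier)
  finally show ?thesis .
qed

lemma herm_decomp_transition_entry:
  assumes d1: "herm_decomp n \<rho> U1 l1" and d2: "herm_decomp n \<rho> U2 l2"
    and i: "i < n" and k: "k < n" and nz: "(adj U1 * U2) $$ (i,k) \<noteq> 0"
  shows "l1 i = l2 k"
proof -
  have U1u: "unitary_mat n U1" and U2u: "unitary_mat n U2" and \<rho>: "\<rho> \<in> carrier_mat n n"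
    using d1 d2 unfolding herm_decomp_def
    by (auto intro!: square_mult_carrier simp: unitary_mat_carrier)
  define W where "W = adj U1 * U2"
  have W: "W \<in> carrier_mat n n"
    unfolding W_def using U1u U2u by (intro square_mult_carrier) (auto simp: unitary_mat_carrier)
  have "rdiag n l1 * W = W * rdiag n l2"
    using unitary_conj_transition[OF U1u U2u \<rho>]
    unfolding W_def herm_decomp_diagonalizes[OF d1] herm_decomp_diagonalizes[OF d2] .
  then have "complex_of_real (l1 i) * W $$ (i,k) = W $$ (i,k) * complex_of_real (l2 k)"
    using index_rdiag_mult[OF W i k] index_mult_rdiag[OF W i k] by metis
  then show ?thesis using nz unfolding W_def by (simp add: mult.commute)
qed

lemma kernel_div_intertwine:
  assumes C1: "C1 \<in> carrier_mat n n" and C2: "C2 \<in> carrier_mat n n" and W: "W \<in> carrier_mat n n"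
    and CW: "C1 * W = W * C2"
    and Wz: "\<And>i k. i < n \<Longrightarrow> k < n \<Longrightarrow> W $$ (i,k) \<noteq> 0 \<Longrightarrow> l1 i = l2 k"
  shows "kernel_div n l1 K C1 * W = W * kernel_div n l2 K C2"
proof (rule eq_matI)
  let ?M1 = "kernel_div n l1 K C1" and ?M2 = "kernel_div n l2 K C2"
  have M1: "?M1 \<in> carrier_mat n n" and M2: "?M2 \<in> carrier_mat n n" by (simp_all add: kernel_div_def)
  fix i k assume "i < dim_row (W * ?M2)" "k < dim_col (W * ?M2)"
  then have i: "i < n" and k: "k < n" using W M2 by auto
  have "(?M1 * W) $$ (i,k) = (\<Sum>j<n. ?M1 $$ (i,j) * W $$ (j,k))"
    using M1 W i k by (intro index_mult_mat_sum) auto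
  also have "\<dots> = (\<Sum>j<n. C1 $$ (i,j) * W $$ (j,k)) / complex_of_real (K (l1 i) (l2 k))"
    unfolding sum_divide_distrib
    by (intro sum.cong refl, use Wz[of _ k] i k in \<open>fastforce simp: kernel_div_def\<close>)
  also have "(\<Sum>j<n. C1 $$ (i,j) * W $$ (j,k)) = (C1 * W) $$ (i,k)"
    using C1 W i k by (intro index_mult_mat_sum[symmetric]) auto
  also have "\<dots> = (W * C2) $$ (i,k)"
    using CW by simp
  also have "\<dots> = (\<Sum>j<n. W $$ (i,j) * C2 $$ (j,k))"
    using C2 W i k by (intro index_mult_mat_sum) auto
  also have "\<dots> / complex_of_real (K (l1 i) (l2 k)) = (\<Sum>j<n. W $$ (i,j) * ?M2 $$ (j,k))"
    unfolding sum_divide_distrib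
    by (intro sum.cong refl, use Wz[of i] i k in \<open>fastforce simp: kernel_div_def\<close>)
  also have "\<dots> = (W * ?M2) $$ (i,k)"
    using M2 W i k by (intro index_mult_mat_sum[symmetric]) auto
  finally show "(?M1 * W) $$ (i,k) = (W * ?M2) $$ (i,k)" .
qed (use W in \<open>auto simp: kernel_div_def\<close>)

lemma kernel_inv_apply_eigenbasis_indep:
  assumes d1: "herm_decomp n \<rho> U1 l1" and d2: "herm_decomp n \<rho> U2 l2" and X: "X \<in> carrier_mat n n"
  shows "kernel_inv_apply n U1 l1 K X = kernel_inv_apply n U2 l2 K X"
proof -
  have U1u: "unitary_mat n U1" and U2u: "unitary_mat n U2"
    using d1 d2 unfolding herm_decomp_def by auto
  have U1: "U1 \<in> carrier_mat n n" and U2: "U2 \<in> carrier_mat n n"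
    using U1u U2u by (simp_all add: unitary_mat_carrier)
  define W where "W = adj U1 * U2"
  define M1 where "M1 = kernel_div n l1 K (adj U1 * X * U1)"
  define M2 where "M2 = kernel_div n l2 K (adj U2 * X * U2)"
  have M1: "M1 \<in> carrier_mat n n" and M2: "M2 \<in> carrier_mat n n" and W: "W \<in> carrier_mat n n"
    using U1 U2 by (simp_all add: M1_def M2_def W_def kernel_div_def square_mult_carrier)
  have MW: "M1 * W = W * M2"
    unfolding M1_def M2_def W_def
    using U1 U2 X unitary_conj_transition[OF U1u U2u X] herm_decomp_transition_entry[OF d1 d2]
    by (intro kernel_div_intertwine) auto
  have "kernel_inv_apply n U1 l1 K X = U1 * M1 * (W * adj U2)"
    unfolding kernel_inv_apply_def M1_def W_def using U1 U2 unitary_mat_right_inverse[OF U2u]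
    by (simp add: square_mult_assoc[of _ n] square_mult_carrier)
  also have "\<dots> = U1 * (M1 * W) * adj U2"
    using U1 U2 M1 W by (simp add: square_mult_assoc[of _ n] square_mult_carrier)
  also have "\<dots> = (U1 * adj U1) * U2 * M2 * adj U2"
    unfolding MW unfolding W_def using U1 U2 M2
    by (simp add: square_mult_assoc[of _ n] square_mult_carrier)
  also have "\<dots> = kernel_inv_apply n U2 l2 K X"
    unfolding kernel_inv_apply_def M2_def using U2 unitary_mat_right_inverse[OF U1u] by simp
  finally show ?thesis .
qed

lemma mf_inv_apply_eq:
  assumes d: "herm_decomp n \<rho> U l" and X: "X \<in> carrier_mat n n"
  shows "mf_inv_apply n f \<rho> X = kernel_inv_apply n U l (mf f) X"
proof -
  let ?P = "\<lambda>Y. \<exists>U l. herm_decomp n \<rho> U l \<and> Y = kernel_inv_apply n U l (mf f) X"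
  have some: "mf_inv_apply n f \<rho> X = (SOME Y. ?P Y)"
    unfolding mf_inv_apply_def kernel_inv_apply_def kernel_div_def ..
  have "?P (SOME Y. ?P Y)" by (rule someI[of ?P]) (use d in blast)
  then obtain U' l'
    where "herm_decomp n \<rho> U' l'" "(SOME Y. ?P Y) = kernel_inv_apply n U' l' (mf f) X"
    by blast
  then show ?thesis unfolding some using kernel_inv_apply_eigenbasis_indep[OF _ d X] by simp
qed

lemma trace_c_mult_comm:
  assumes "P \<in> carrier_mat n n" "Q \<in> carrier_mat n n"
  shows "trace_c n (P * Q) = trace_c n (Q * P)"
proof -
  have "trace_c n (P * Q) = (\<Sum>i<n. \<Sum>k<n. P $$ (i,k) * Q $$ (k,i))"
    unfolding trace_c_def using assms by (intro sum.cong refl index_mult_mat_sum) auto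
  also have "\<dots> = (\<Sum>k<n. \<Sum>i<n. Q $$ (k,i) * P $$ (i,k))"
    by (subst sum.swap) (simp add: mult.commute)
  also have "\<dots> = trace_c n (Q * P)"
    unfolding trace_c_def using assms by (intro sum.cong refl index_mult_mat_sum[symmetric]) auto
  finally show ?thesis .
qed

lemma trace_adj_kernel_inv_apply:
  assumes U: "U \<in> carrier_mat n n" and X: "X \<in> carrier_mat n n"
  shows "Re (trace_c n (adj X * kernel_inv_apply n U l K X)) =
    (\<Sum>i<n. \<Sum>k<n. (cmod ((adj U * X * U) $$ (k,i)))\<^sup>2 / K (l k) (l i))"
proof -
  define C where "C = adj U * X * U"
  define M where "M = kernel_div n l K C"
  have C: "C \<in> carrier_mat n n" and M: "M \<in> carrier_mat n n"
    using U X by (simp_all add: C_def M_def kernel_div_def square_mult_carrier)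
  have "kernel_inv_apply n U l K X = U * M * adj U"
    unfolding kernel_inv_apply_def M_def C_def ..
  then have "trace_c n (adj X * kernel_inv_apply n U l K X) = trace_c n ((adj X * U * M) * adj U)"
    using U X M by (simp add: square_mult_assoc[of _ n] square_mult_carrier)
  also have "\<dots> = trace_c n (adj C * M)"
    using U X M by (subst trace_c_mult_comm[of _ n])
      (simp_all add: C_def adj_mult[of _ n n _ n] square_mult_assoc[of _ n] square_mult_carrier)
  also have "\<dots> = (\<Sum>i<n. \<Sum>k<n. cnj (C $$ (k,i)) * C $$ (k,i) / complex_of_real (K (l k) (l i)))"
    unfolding trace_c_def
  proof (intro sum.cong refl)
    fix i assume "i \<in> {..<n}"
    then have "(adj C * M) $$ (i,i) = (\<Sum>k<n. adj C $$ (i,k) * M $$ (k,i))"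
      using C M by (intro index_mult_mat_sum) auto
    then show "(adj C * M) $$ (i,i) =
        (\<Sum>k<n. cnj (C $$ (k,i)) * C $$ (k,i) / complex_of_real (K (l k) (l i)))"
      using C \<open>i \<in> {..<n}\<close> by (simp add: M_def kernel_div_def)
  qed
  also have "\<dots> = (\<Sum>i<n. \<Sum>k<n. complex_of_real ((cmod (C $$ (k,i)))\<^sup>2 / K (l k) (l i)))"
  proof -
    have "cnj z * z / complex_of_real r = complex_of_real ((cmod z)\<^sup>2 / r)" for z r
      using complex_norm_square[of z] by (simp add: mult.commute)
    then show ?thesis by (simp only:)
  qed
  finally show ?thesis unfolding C_def by simp
qed

lemma unitary_conj_mult:
  assumes Uu: "unitary_mat n U" and P: "P \<in> carrier_mat n n" and Q: "Q \<in> carrier_mat n n"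
  shows "adj U * (P * Q) * U = (adj U * P * U) * (adj U * Q * U)"
proof -
  have U: "U \<in> carrier_mat n n" using Uu by (rule unitary_mat_carrier)
  have "(adj U * P * U) * (adj U * Q * U) = adj U * P * (U * adj U) * Q * U"
    using U P Q by (simp add: square_mult_assoc[of _ n] square_mult_carrier)
  then show ?thesis
    using U P Q unitary_mat_right_inverse[OF Uu]
    by (simp add: square_mult_assoc[of _ n] square_mult_carrier)
qed

lemma herm_decomp_commutator:
  assumes d: "herm_decomp n \<rho> U l" and A: "A \<in> carrier_mat n n"
  shows "adj U * (\<rho> * A - A * \<rho>) * U = rdiag n l * (adj U * A * U) - (adj U * A * U) * rdiag n l"
proof -
  have Uu: "unitary_mat n U" and U: "U \<in> carrier_mat n n" and \<rho>: "\<rho> \<in> carrier_mat n n"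
    using d by (auto simp: herm_decomp_def unitary_mat_carrier intro!: square_mult_carrier)
  note unitary_conj_mult[OF Uu \<rho> A] unitary_conj_mult[OF Uu A \<rho>]
  moreover have "adj U * (\<rho> * A - A * \<rho>) * U = adj U * (\<rho> * A) * U - adj U * (A * \<rho>) * U"
  proof -
    have "\<rho> * A \<in> carrier_mat n n" "A * \<rho> \<in> carrier_mat n n"
      using A \<rho> by (simp_all add: square_mult_carrier)
    moreover have "adj U * (\<rho> * A) \<in> carrier_mat n n" "adj U * (A * \<rho>) \<in> carrier_mat n n"
      using A \<rho> U by (simp_all add: square_mult_carrier)
    ultimately show ?thesis
      using U by (simp add: mult_minus_distrib_mat[of _ n n] minus_mult_distrib_mat[of _ n n])
  qed
  ultimately show ?thesis using herm_decomp_diagonalizes[OF d] by simp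
qed

lemma f_information_eq_sum:
  assumes d: "herm_decomp n \<rho> U l" and A: "A \<in> carrier_mat n n"
  shows "f_information n h \<rho> A = (\<Sum>i<n. \<Sum>k<n.
    (cmod ((adj U * A * U) $$ (k,i)))\<^sup>2 * (f0 h * (l k - l i)\<^sup>2 / (2 * mf h (l k) (l i))))"
proof -
  have U: "U \<in> carrier_mat n n" and \<rho>: "\<rho> \<in> carrier_mat n n"
    using d by (auto simp: herm_decomp_def unitary_mat_carrier intro!: square_mult_carrier)
  define Z where "Z = \<rho> * A - A * \<rho>"
  define G where "G = adj U * A * U"
  have Z: "Z \<in> carrier_mat n n" and G: "G \<in> carrier_mat n n"
    using U A \<rho> by (auto simp: Z_def G_def intro!: minus_carrier_mat square_mult_carrier)
  have conj: "adj U * (\<i> \<cdot>\<^sub>m Z) * U = \<i> \<cdot>\<^sub>m (rdiag n l * G - G * rdiag n l)"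
    using herm_decomp_commutator[OF d A] U Z
    by (simp add: Z_def G_def mult_smult_distrib[of _ n n] mult_smult_assoc_mat[of _ n n]
        square_mult_carrier)
  have entry: "cmod ((adj U * (\<i> \<cdot>\<^sub>m Z) * U) $$ (k,i)) = \<bar>l k - l i\<bar> * cmod (G $$ (k,i))"
    if k: "k < n" and i: "i < n" for k i
  proof -
    have "(adj U * (\<i> \<cdot>\<^sub>m Z) * U) $$ (k,i) =
        \<i> * (complex_of_real (l k) * G $$ (k,i) - G $$ (k,i) * complex_of_real (l i))"
      unfolding conj index_rdiag_mult[OF G k i, symmetric] index_mult_rdiag[OF G k i, symmetric]
      using G k i by (auto simp: rdiag_def)
    also have "\<dots> = \<i> * complex_of_real (l k - l i) * G $$ (k,i)"
      by (simp add: algebra_simps)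
    finally show ?thesis by (simp add: norm_mult del: of_real_diff)
  qed
  have "f_information n h \<rho> A =
      f0 h / 2 * (\<Sum>i<n. \<Sum>k<n. (cmod ((adj U * (\<i> \<cdot>\<^sub>m Z) * U) $$ (k,i)))\<^sup>2 / mf h (l k) (l i))"
    unfolding f_information_def f_norm_sq_def Z_def[symmetric]
    using mf_inv_apply_eq[OF d] trace_adj_kernel_inv_apply[OF U] Z by simp
  also have "\<dots> = (\<Sum>i<n. \<Sum>k<n.
      (cmod (G $$ (k,i)))\<^sup>2 * (f0 h * (l k - l i)\<^sup>2 / (2 * mf h (l k) (l i))))"
    unfolding sum_distrib_left by (intro sum.cong refl) (simp add: entry power_mult_distrib)
  finally show ?thesis unfolding G_def .
qed

text \<open>The definition of \<open>tilde\<close> is designed to make this identity hold.\<close>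
lemma information_kernel_eq_tilde:
  fixes h :: "real \<Rightarrow> real" and a b :: real
  assumes a: "a > 0" and h: "h (b / a) \<noteq> 0"
  shows "f0 h * (a - b)\<^sup>2 / (2 * mf h a b) = (a + b) / 2 - mf (tilde h) a b"
proof -
  have "(a - b)\<^sup>2 = a\<^sup>2 * (b / a - 1)\<^sup>2" using a by (simp add: power2_eq_square field_simps)
  then show ?thesis using a h unfolding mf_def tilde_def by (simp add: power2_eq_square field_simps)
qed

lemma f_information_eq_tilde_sum:
  assumes h: "\<forall>x>0. h x > 0" and p: "pos_def_mat n \<rho>" and d: "herm_decomp n \<rho> U l"
    and A: "A \<in> carrier_mat n n"
  shows "f_information n h \<rho> A = (\<Sum>i<n. \<Sum>k<n.
    (cmod ((adj U * A * U) $$ (k,i)))\<^sup>2 * ((l k + l i) / 2 - mf (tilde h) (l k) (l i)))"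
  unfolding f_information_eq_sum[OF d A]
proof (intro sum.cong refl)
  fix i k assume "i \<in> {..<n}" "k \<in> {..<n}"
  then have lk: "l k > 0" and hk: "h (l i / l k) \<noteq> 0"
    using herm_decomp_eigenvalue_pos[OF p d] h by (auto intro!: less_imp_neq[symmetric])
  show "(cmod ((adj U * A * U) $$ (k,i)))\<^sup>2 * (f0 h * (l k - l i)\<^sup>2 / (2 * mf h (l k) (l i))) =
    (cmod ((adj U * A * U) $$ (k,i)))\<^sup>2 * ((l k + l i) / 2 - mf (tilde h) (l k) (l i))"
    by (simp only: information_kernel_eq_tilde[where h = h, OF lk hk])
qed

theorem mainTheorem4:
  fixes f g :: "real \<Rightarrow> real" and n :: nat and \<rho> A :: "complex mat"
  assumes "F_op_r f" and "F_op_r g"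
    and "\<forall>x>0. tilde g x \<le> tilde f x"
    and "density_pos n \<rho>"
    and "hermitian_mat n A"
  shows "f_information n f \<rho> A \<le> f_information n g \<rho> A"
proof -
  have f: "\<forall>x>0. f x > 0" and g: "\<forall>x>0. g x > 0"
    using assms(1,2) unfolding F_op_r_def F_op_def by auto
  have p: "pos_def_mat n \<rho>" using assms(4) unfolding density_pos_def by auto
  then obtain U l where d: "herm_decomp n \<rho> U l"
    using herm_decomp_exists unfolding pos_def_mat_def by blast
  have A: "A \<in> carrier_mat n n" using assms(5) unfolding hermitian_mat_def by auto
  have l: "\<And>k. k < n \<Longrightarrow> l k > 0" using herm_decomp_eigenvalue_pos[OF p d] .
  show ?thesis
    unfolding f_information_eq_tilde_sum[OF f p d A] f_information_eq_tilde_sum[OF g p d A]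
  proof (intro sum_mono mult_left_mono diff_left_mono)
    fix i k assume "i \<in> {..<n}" "k \<in> {..<n}"
    then show "mf (tilde g) (l k) (l i) \<le> mf (tilde f) (l k) (l i)"
      using l assms(3) unfolding mf_def by (simp add: mult_left_mono)
  qed simp
qed

end
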